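(* Let $q\ge 2$ be a prime power, $n=q^2(q^2-q+1)$, $m=2^{24}q^2$, and let $X\subseteq V(H_q)$ with $|X|=m$. Then at least one of the following holds: (a) $\displaystyle\sum_{T\in\mathcal T_X,\ |T|\le \sqrt{2m}/\log n}\binom{|T|}{2}\;\ge\;\frac{m^2}{64q}$; (b) $\displaystyle\sum_{T\in\mathcal T_X,\ \sqrt{2m}/\log n<|T|\le \sqrt{2m}}\binom{|T|}{2}\;\ge\;\frac{q\,m^{3/2}}{16\log^2 n}$. (Each sum counts the edges of $H_q[X]$ lying in the cliques of $\mathcal T_X$ of the indicated orders.)
   Context: $\mathcal H$ is the Hermitian unital $\{\langle x,y,z\rangle : x^{q+1}+y^{q+1}+z^{q+1}=0\}$ in the projective plane $\mathrm{PG}(2,q^2)$ (it has $q^3+1$ points and every line meets it in $1$ or $q+1$ points; lines meeting it in $q+1$ points are secants). $H_q$ is the graph on the set of secants, two distinct secants adjacent iff they meet in a point of $\mathcal H$. For $P\in\mathcal H$, $C_P$ is the set of secants through $P$ and $\mathcal C=\{C_P:P\in\mathcal H\}$; these are $q^3+1$ cliques of order $q^2$, any two sharing exactly one vertex, every vertex lies in exactly $q+1$ of them, and every edge of $H_q$ lies in exactly one of them. For $X\subseteq V(H_q)$, $\mathcal T_X=\{X\cap C : C\in\mathcal C,\ |X\cap C|\ge 2\}$ (indexed by the cliques $C$). Logarithms are natural. *)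

theory Defs
  imports Complex_Main "HOL-Computational_Algebra.Primes"
begin

text \<open>Vectors of F^3 for a finite field F of order q^2 (F = GF(q^2)).\<close>
type_synonym 'a vec3 = "'a \<times> 'a \<times> 'a"
type_synonym 'a ppoint = "'a vec3 set"     \<comment> \<open>a projective point = set of nonzero multiples\<close>
type_synonym 'a pline = "'a ppoint set"    \<comment> \<open>a line = its set of points\<close>

definition smult3 :: "'a::field \<Rightarrow> 'a vec3 \<Rightarrow> 'a vec3" where
  "smult3 c v = (case v of (x, y, z) \<Rightarrow> (c * x, c * y, c * z))"

definition dot3 :: "'a::field vec3 \<Rightarrow> 'a vec3 \<Rightarrow> 'a" where
  "dot3 u v = (case u of (a, b, c) \<Rightarrow> case v of (x, y, z) \<Rightarrow> a * x + b * y + c * z)"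

definition proj_point :: "'a::field vec3 \<Rightarrow> 'a ppoint" where
  "proj_point v = {smult3 c v | c. c \<noteq> 0}"

definition pg_points :: "'a::field ppoint set" where
  "pg_points = {proj_point v | v. v \<noteq> (0, 0, 0)}"

definition pg_line :: "'a::field vec3 \<Rightarrow> 'a pline" where
  "pg_line a = {P \<in> pg_points. \<exists>v\<in>P. dot3 a v = 0}"

definition pg_lines :: "'a::field pline set" where
  "pg_lines = {pg_line a | a. a \<noteq> (0, 0, 0)}"

definition herm :: "nat \<Rightarrow> 'a::field vec3 \<Rightarrow> 'a" where
  "herm q v = (case v of (x, y, z) \<Rightarrow> x ^ (q + 1) + y ^ (q + 1) + z ^ (q + 1))"

definition unital :: "nat \<Rightarrow> 'a::field ppoint set" where
  "unital q = {P \<in> pg_points. \<exists>v\<in>P. herm q v = 0}"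

text \<open>Secants: lines meeting \<H> in q+1 points; these are the vertices of H_q.\<close>
definition secants :: "nat \<Rightarrow> 'a::field pline set" where
  "secants q = {L \<in> pg_lines. card (L \<inter> unital q) = q + 1}"

definition clique :: "nat \<Rightarrow> 'a::field ppoint \<Rightarrow> 'a pline set" where
  "clique q P = {L \<in> secants q. P \<in> L}"

text \<open>Sum of binom(|T|,2) over T = X \<inter> C_P in \<T>_X (i.e. |T| \<ge> 2), indexed by the cliques
  C_P (P \<in> \<H>), restricted to those with lo < |T| \<le> hi.\<close>
definition clique_sum :: "nat \<Rightarrow> 'a::field pline set \<Rightarrow> real \<Rightarrow> real \<Rightarrow> real" where
  "clique_sum q X lo hi =
     (\<Sum>P \<in> {P \<in> unital q. 2 \<le> card (X \<inter> clique q P)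
                 \<and> lo < real (card (X \<inter> clique q P)) \<and> real (card (X \<inter> clique q P)) \<le> hi}.
        real (card (X \<inter> clique q P) choose 2))"

end

theory Submission
  imports Defs "HOL-Computational_Algebra.Polynomial" "HOL-Analysis.Convex"
begin

text \<open>Put t_P = |X \<inter> C_P| for P \<in> \<H>. Every secant carries q + 1 points of \<H>, so the t_P sum to
  m (q + 1) = 2^24 q^3 + O(m), while |\<H>| \<le> 2 q^3, so points with t_P \<le> 1 contribute little.
  Points with t_P > \<surd>(2m) contribute at most 2m: two points of \<H> lie on at most one common
  secant, so Cauchy-Schwarz over the secants of X bounds their incidences. Hence almost all the
  weight sits on cliques with 2 \<le> t_P \<le> \<surd>(2m). If those of order above \<surd>(2m)/log n carry
  a fixed fraction of it, each contributes binom(t_P, 2) \<ge> t_P \<surd>(2m) / (4 log n), which gives (b);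
  otherwise the remaining weight is spread over at most 2 q^3 cliques and Cauchy-Schwarz gives
  \<Sum> binom(t_P, 2) \<ge> (\<Sum> t_P)^2 / (4 q^3) - O(\<Sum> t_P), which gives (a).\<close>

section \<open>Counting\<close>

lemma real_choose_two: "real (n choose 2) = real n * (real n - 1) / 2"
proof (induction n)
  case (Suc n)
  have "Suc n choose 2 = n + (n choose 2)" by (simp add: numeral_2_eq_2)
  then show ?case using Suc by (simp add: field_simps)
qed simp

lemma sum_card_filter_swap:
  assumes "finite A" "finite B"
  shows "(\<Sum>a\<in>A. card {b\<in>B. R a b}) = (\<Sum>b\<in>B. card {a\<in>A. R a b})"
proof -
  have "(\<Sum>a\<in>A. card {b\<in>B. R a b}) = (\<Sum>a\<in>A. \<Sum>b\<in>B. if R a b then 1 else 0)"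
    using assms by (simp add: sum.inter_filter[symmetric])
  also have "\<dots> = (\<Sum>b\<in>B. \<Sum>a\<in>A. if R a b then 1 else 0)" by (rule sum.swap)
  also have "\<dots> = (\<Sum>b\<in>B. card {a\<in>A. R a b})" using assms by (simp add: sum.inter_filter[symmetric])
  finally show ?thesis .
qed

lemma sum_choose_two_ge_threshold:
  assumes "a \<ge> 2" and big: "\<And>P. P \<in> S \<Longrightarrow> a < real (t P)"
  shows "a / 4 * (\<Sum>P\<in>S. real (t P)) \<le> (\<Sum>P\<in>S. real (t P choose 2))"
proof -
  have "a / 4 * real (t P) \<le> real (t P choose 2)" if "P \<in> S" for P
  proof -
    have "a / 2 \<le> real (t P) - 1" using big[OF that] \<open>a \<ge> 2\<close> by simp
    then have "real (t P) * (a / 2) \<le> real (t P) * (real (t P) - 1)" by (intro mult_left_mono) auto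
    then show ?thesis by (simp add: real_choose_two algebra_simps)
  qed
  then show ?thesis by (simp add: sum_distrib_left sum_mono)
qed

lemma sum_choose_two_ge_square:
  assumes "finite S" "real (card S) \<le> c"
  shows "((\<Sum>P\<in>S. real (t P))\<^sup>2 / c - (\<Sum>P\<in>S. real (t P))) / 2 \<le> (\<Sum>P\<in>S. real (t P choose 2))"
proof (cases "S = {}")
  case False
  then have "c > 0" using assms by (metis card_gt_0_iff of_nat_0_less_iff order_less_le_trans)
  have "(\<Sum>P\<in>S. real (t P))\<^sup>2 \<le> (\<Sum>P\<in>S. (real (t P))\<^sup>2) * real (card S)"
    by (rule sum_squared_le_sum_of_squares)
  also have "\<dots> \<le> (\<Sum>P\<in>S. (real (t P))\<^sup>2) * c"
    using assms(2) by (intro mult_left_mono sum_nonneg) auto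
  finally have "(\<Sum>P\<in>S. real (t P))\<^sup>2 / c \<le> (\<Sum>P\<in>S. (real (t P))\<^sup>2)"
    using \<open>c > 0\<close> by (simp add: divide_le_eq)
  moreover have "(\<Sum>P\<in>S. real (t P choose 2)) = ((\<Sum>P\<in>S. (real (t P))\<^sup>2) - (\<Sum>P\<in>S. real (t P))) / 2"
    by (simp add: real_choose_two power2_eq_square right_diff_distrib sum_subtractf
        flip: sum_divide_distrib)
  ultimately show ?thesis by (simp add: divide_right_mono)
qed simp

lemma sum_square_degree_le:
  fixes X :: "'b set set" and S :: "'b set"
  assumes "finite X" "finite S"
    and unique: "\<And>P Q. P \<in> S \<Longrightarrow> Q \<in> S \<Longrightarrow> P \<noteq> Q \<Longrightarrow> card {L\<in>X. P \<in> L \<and> Q \<in> L} \<le> 1"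
  shows "(\<Sum>L\<in>X. card {P\<in>S. P \<in> L} ^ 2) \<le> (\<Sum>P\<in>S. card {L\<in>X. P \<in> L}) + card S ^ 2"
proof -
  have "card {P\<in>S. P \<in> L} ^ 2 = (\<Sum>P\<in>S. \<Sum>Q\<in>S. if P \<in> L \<and> Q \<in> L then 1 else 0)" for L
  proof -
    have "card {P\<in>S. P \<in> L} = (\<Sum>P\<in>S. if P \<in> L then 1 else 0)"
      using assms(2) by (simp add: sum.inter_filter[symmetric])
    then show ?thesis by (simp add: power2_eq_square sum_product) (intro sum.cong refl; auto)
  qed
  then have "(\<Sum>L\<in>X. card {P\<in>S. P \<in> L} ^ 2) = (\<Sum>L\<in>X. \<Sum>P\<in>S. \<Sum>Q\<in>S. if P \<in> L \<and> Q \<in> L then 1 else 0)"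
    by simp
  also have "\<dots> = (\<Sum>P\<in>S. \<Sum>L\<in>X. \<Sum>Q\<in>S. if P \<in> L \<and> Q \<in> L then 1 else 0)"
    by (rule sum.swap)
  also have "\<dots> = (\<Sum>P\<in>S. \<Sum>Q\<in>S. \<Sum>L\<in>X. if P \<in> L \<and> Q \<in> L then 1 else 0)"
    by (rule sum.cong[OF refl], rule sum.swap)
  also have "\<dots> = (\<Sum>P\<in>S. \<Sum>Q\<in>S. card {L\<in>X. P \<in> L \<and> Q \<in> L})"
    using assms(1) by (simp add: sum.inter_filter[symmetric])
  also have "\<dots> \<le> (\<Sum>P\<in>S. \<Sum>Q\<in>S. (if P = Q then card {L\<in>X. P \<in> L} else 0) + 1)"
    by (intro sum_mono) (use unique in auto)
  also have "\<dots> = (\<Sum>P\<in>S. card {L\<in>X. P \<in> L} + card S)"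
    using assms(2) by (intro sum.cong refl) (simp only: sum.distrib, simp)
  also have "\<dots> = (\<Sum>P\<in>S. card {L\<in>X. P \<in> L}) + card S ^ 2"
    by (simp add: sum.distrib power2_eq_square)
  finally show ?thesis .
qed

lemma sum_degree_le_if_degrees_large:
  fixes X :: "'b set set" and S :: "'b set" and b :: real
  assumes "finite X" "finite S"
    and unique: "\<And>P Q. P \<in> S \<Longrightarrow> Q \<in> S \<Longrightarrow> P \<noteq> Q \<Longrightarrow> card {L\<in>X. P \<in> L \<and> Q \<in> L} \<le> 1"
    and "b \<ge> 0" "2 * real (card X) \<le> b\<^sup>2"
    and large: "\<And>P. P \<in> S \<Longrightarrow> b \<le> real (card {L\<in>X. P \<in> L})"
  shows "(\<Sum>P\<in>S. real (card {L\<in>X. P \<in> L})) \<le> 2 * real (card X)"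
proof -
  define D where "D = (\<Sum>P\<in>S. real (card {L\<in>X. P \<in> L}))"
  define k where "k = real (card S)"
  define x where "x = real (card X)"
  have "D = (\<Sum>L\<in>X. real (card {P\<in>S. P \<in> L}))"
    using sum_card_filter_swap[OF assms(2,1), of "\<lambda>P L. P \<in> L"]
    unfolding D_def by (metis (no_types) of_nat_sum)
  then have "D\<^sup>2 \<le> (\<Sum>L\<in>X. (real (card {P\<in>S. P \<in> L}))\<^sup>2) * x"
    unfolding x_def by (simp only: sum_squared_le_sum_of_squares)
  also have "\<dots> \<le> (D + k\<^sup>2) * x"
  proof (rule mult_right_mono)
    have "(\<Sum>L\<in>X. card {P\<in>S. P \<in> L} ^ 2) \<le> (\<Sum>P\<in>S. card {L\<in>X. P \<in> L}) + card S ^ 2"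
      using assms(1,2) unique by (rule sum_square_degree_le)
    then have "real (\<Sum>L\<in>X. card {P\<in>S. P \<in> L} ^ 2) \<le> real ((\<Sum>P\<in>S. card {L\<in>X. P \<in> L}) + card S ^ 2)"
      by (simp only: of_nat_le_iff)
    then show "(\<Sum>L\<in>X. (real (card {P\<in>S. P \<in> L}))\<^sup>2) \<le> D + k\<^sup>2"
      by (simp only: D_def k_def of_nat_add of_nat_sum of_nat_power)
  qed (simp add: x_def)
  finally have D_sq: "D\<^sup>2 \<le> D * x + k\<^sup>2 * x" by (simp add: distrib_right)
  have "k * b \<le> D"
    unfolding k_def D_def using sum_mono[of S "\<lambda>_. b", OF large] by simp
  then have "(k * b)\<^sup>2 \<le> D\<^sup>2"
    using \<open>b \<ge> 0\<close> by (intro power_mono) (simp_all add: k_def)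
  moreover have "k\<^sup>2 * (2 * x) \<le> (k * b)\<^sup>2"
    using assms(5) unfolding x_def power_mult_distrib by (intro mult_left_mono) simp_all
  ultimately have "D * D \<le> D * (2 * x)"
    using D_sq unfolding power2_eq_square by linarith
  moreover have "D \<ge> 0"
    by (simp add: D_def sum_nonneg)
  ultimately have "D \<le> 2 * x"
    by (cases "D = 0") (simp_all add: x_def)
  then show ?thesis by (simp add: D_def x_def)
qed

section \<open>Lines of the projective plane\<close>

lemma smult3_smult3: "smult3 c (smult3 d v) = smult3 (c * d) v"
  by (cases v) (simp add: smult3_def)

lemma smult3_one: "smult3 1 v = v"
  by (cases v) (simp add: smult3_def)

lemma smult3_eq_zero_iff: "smult3 c v = (0, 0, 0) \<longleftrightarrow> c = 0 \<or> v = ((0::'a::field), 0, 0)"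
  by (cases v) (auto simp: smult3_def)

lemma dot3_smult3_left: "dot3 (smult3 c a) v = c * dot3 a v"
  by (cases a; cases v) (simp add: smult3_def dot3_def algebra_simps)

lemma dot3_smult3_right: "dot3 a (smult3 c v) = c * dot3 a v"
  by (cases a; cases v) (simp add: smult3_def dot3_def algebra_simps)

lemma herm_smult3: "herm q (smult3 c v) = c ^ (q + 1) * herm q v"
  by (cases v) (simp add: smult3_def herm_def algebra_simps power_mult_distrib)

lemma proj_point_smult3:
  assumes "(c::'a::field) \<noteq> 0"
  shows "proj_point (smult3 c v) = proj_point v"
proof -
  have "smult3 d (smult3 c v) \<in> proj_point v" if "d \<noteq> 0" for d
    using assms that by (auto simp: proj_point_def smult3_smult3 intro!: exI[of _ "d * c"])
  moreover have "smult3 d v \<in> proj_point (smult3 c v)" if "d \<noteq> 0" for d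
    using assms that by (auto simp: proj_point_def smult3_smult3 intro!: exI[of _ "d / c"])
  ultimately show ?thesis by (auto simp: proj_point_def)
qed

lemma proj_point_eq_if_mem:
  assumes "x \<in> proj_point v"
  shows "proj_point x = proj_point (v::'a::field vec3)"
proof -
  obtain c where "c \<noteq> 0" "x = smult3 c v" using assms by (auto simp: proj_point_def)
  then show ?thesis by (simp add: proj_point_smult3)
qed

lemma pg_line_smult3: "c \<noteq> 0 \<Longrightarrow> pg_line (smult3 c a) = pg_line (a::'a::field vec3)"
  by (simp add: pg_line_def dot3_smult3_left)

lemma proj_point_in_pg_line_iff:
  assumes "u \<noteq> (0, 0, 0)"
  shows "proj_point u \<in> pg_line a \<longleftrightarrow> dot3 a u = (0::'a::field)"
proof
  assume "proj_point u \<in> pg_line a"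
  then obtain x where "x \<in> proj_point u" "dot3 a x = 0" by (auto simp: pg_line_def)
  then obtain c where "c \<noteq> 0" "dot3 a (smult3 c u) = 0" by (auto simp: proj_point_def)
  then show "dot3 a u = 0" by (simp add: dot3_smult3_right)
next
  assume "dot3 a u = 0"
  moreover have "proj_point u \<in> pg_points" using assms unfolding pg_points_def by blast
  moreover have "u \<in> proj_point u" unfolding proj_point_def by (auto intro!: exI[of _ 1] simp: smult3_one)
  ultimately show "proj_point u \<in> pg_line a" by (auto simp: pg_line_def)
qed

definition cross3 :: "'a::field vec3 \<Rightarrow> 'a vec3 \<Rightarrow> 'a vec3" where
  "cross3 u v = (case u of (x1, x2, x3) \<Rightarrow> case v of (y1, y2, y3) \<Rightarrow>
      (x2 * y3 - x3 * y2, x3 * y1 - x1 * y3, x1 * y2 - x2 * y1))"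

lemma cross3_eq_zero_imp_smult3:
  fixes x y :: "'a::field vec3"
  assumes "x \<noteq> (0, 0, 0)" "cross3 x y = (0, 0, 0)"
  obtains c where "y = smult3 c x"
proof -
  obtain x1 x2 x3 y1 y2 y3 where xy: "x = (x1, x2, x3)" "y = (y1, y2, y3)" by (cases x, cases y) auto
  have e: "x2 * y3 = x3 * y2" "x3 * y1 = x1 * y3" "x1 * y2 = x2 * y1"
    using assms(2) by (auto simp: xy cross3_def)
  consider "x1 \<noteq> 0" | "x2 \<noteq> 0" | "x3 \<noteq> 0" using assms(1) xy by auto
  then show thesis
  proof cases
    case 1 then show thesis using e by (intro that[of "y1 / x1"]) (auto simp: xy smult3_def field_simps)
  next
    case 2 then show thesis using e by (intro that[of "y2 / x2"]) (auto simp: xy smult3_def field_simps)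
  next
    case 3 then show thesis using e by (intro that[of "y3 / x3"]) (auto simp: xy smult3_def field_simps)
  qed
qed

lemma cross3_cross3_eq_zero:
  assumes "dot3 a u = 0" "dot3 a v = (0::'a::field)"
  shows "cross3 (cross3 u v) a = (0, 0, 0)"
proof -
  obtain a1 a2 a3 x1 x2 x3 y1 y2 y3
    where v: "a = (a1, a2, a3)" "u = (x1, x2, x3)" "v = (y1, y2, y3)"
    by (cases a, cases u, cases v) auto
  have "a1 * x1 + a2 * x2 + a3 * x3 = 0" "a1 * y1 + a2 * y2 + a3 * y3 = 0"
    using assms by (auto simp: v dot3_def)
  moreover have "cross3 (cross3 u v) a =
      (y1 * (a1 * x1 + a2 * x2 + a3 * x3) - x1 * (a1 * y1 + a2 * y2 + a3 * y3),
       y2 * (a1 * x1 + a2 * x2 + a3 * x3) - x2 * (a1 * y1 + a2 * y2 + a3 * y3),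
       y3 * (a1 * x1 + a2 * x2 + a3 * x3) - x3 * (a1 * y1 + a2 * y2 + a3 * y3))"
    by (simp add: v cross3_def algebra_simps)
  ultimately show ?thesis by simp
qed

lemma pg_line_unique:
  fixes P Q :: "'a::field ppoint"
  assumes "P \<in> pg_points" "Q \<in> pg_points" "P \<noteq> Q" "L \<in> pg_lines" "L' \<in> pg_lines"
    and "P \<in> L" "Q \<in> L" "P \<in> L'" "Q \<in> L'"
  shows "L = L'"
proof -
  obtain u v where u: "u \<noteq> (0, 0, 0)" "P = proj_point u" and v: "v \<noteq> (0, 0, 0)" "Q = proj_point v"
    using assms(1,2) unfolding pg_points_def by blast
  obtain a b where a: "a \<noteq> (0, 0, 0)" "L = pg_line a" and b: "b \<noteq> (0, 0, 0)" "L' = pg_line b"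
    using assms(4,5) unfolding pg_lines_def by blast
  have w: "cross3 u v \<noteq> (0, 0, 0)"
  proof
    assume "cross3 u v = (0, 0, 0)"
    with u(1) obtain c where c: "v = smult3 c u" by (rule cross3_eq_zero_imp_smult3)
    with v(1) have "c \<noteq> 0" by (auto simp: smult3_eq_zero_iff)
    with u v c have "Q = P" by (simp add: proj_point_smult3)
    with assms(3) show False by simp
  qed
  have "dot3 a u = 0" "dot3 a v = 0" "dot3 b u = 0" "dot3 b v = 0"
    using assms(6-9) a b u v proj_point_in_pg_line_iff by metis+
  then obtain c d where "a = smult3 c (cross3 u v)" "b = smult3 d (cross3 u v)"
    using cross3_eq_zero_imp_smult3[OF w] cross3_cross3_eq_zero by metis
  with a b show ?thesis by (metis pg_line_smult3 smult3_eq_zero_iff)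
qed

section \<open>Size of the unital\<close>

lemma card_roots_power_le:
  fixes c :: "'a::field"
  shows "card {z. z ^ (q + 1) = c} \<le> q + 1"
proof -
  define p where "p = monom (1::'a) (q + 1) + [:- c:]"
  have "degree p = q + 1" unfolding p_def
    by (subst degree_add_eq_left) (auto simp: degree_monom_eq)
  then have "p \<noteq> 0" by auto
  have "{z. z ^ (q + 1) = c} = {z. poly p z = 0}" by (auto simp: p_def poly_monom)
  with card_poly_roots_bound[OF \<open>p \<noteq> 0\<close>] \<open>degree p = q + 1\<close> show ?thesis by simp
qed

lemma card_herm_zeros_le:
  "card {v :: ('a::{field,finite}) vec3. herm q v = 0} \<le> card (UNIV :: 'a set) ^ 2 * (q + 1)"
proof -
  define R where "R xy = {z. z ^ (q + 1) = - (fst xy ^ (q + 1) + snd xy ^ (q + 1))}" for xy :: "'a \<times> 'a"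
  have "{v :: 'a vec3. herm q v = 0} \<subseteq> (\<lambda>(xy, z). (fst xy, snd xy, z)) ` (SIGMA xy:UNIV. R xy)"
  proof
    fix v :: "'a vec3" assume "v \<in> {v. herm q v = 0}"
    then obtain x y z where "v = (x, y, z)" "z ^ (q + 1) = - (x ^ (q + 1) + y ^ (q + 1))"
      by (cases v) (auto simp: herm_def eq_neg_iff_add_eq_0 algebra_simps)
    then show "v \<in> (\<lambda>(xy, z). (fst xy, snd xy, z)) ` (SIGMA xy:UNIV. R xy)"
      by (auto simp: R_def intro!: image_eqI[of _ _ "((x, y), z)"])
  qed
  then have "card {v :: 'a vec3. herm q v = 0} \<le> card (SIGMA xy:UNIV. R xy)"
    by (meson card_image_le card_mono finite order_trans)
  also have "\<dots> = (\<Sum>xy\<in>UNIV. card (R xy))" by simp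
  also have "\<dots> \<le> (\<Sum>xy\<in>(UNIV::('a \<times> 'a) set). q + 1)"
    unfolding R_def by (intro sum_mono card_roots_power_le)
  also have "\<dots> = card (UNIV :: ('a \<times> 'a) set) * (q + 1)" by simp
  also have "card (UNIV :: ('a \<times> 'a) set) = card (UNIV :: 'a set) ^ 2"
    by (metis UNIV_Times_UNIV card_cartesian_product power2_eq_square)
  finally show ?thesis .
qed

lemma card_pg_point:
  assumes "P \<in> (pg_points :: ('a::{field,finite}) ppoint set)"
  shows "card P = card (UNIV :: 'a set) - 1"
proof -
  obtain u where u: "u \<noteq> (0, 0, 0)" "P = proj_point u" using assms unfolding pg_points_def by blast
  have "P = (\<lambda>c. smult3 c u) ` (UNIV - {0})" using u by (auto simp: proj_point_def)
  moreover have "inj_on (\<lambda>c. smult3 c u) (UNIV - {0})"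
    using u by (cases u) (auto simp: inj_on_def smult3_def)
  ultimately show ?thesis by (simp add: card_image card_Diff_singleton)
qed

text \<open>Distinct projective points are disjoint, and the points of the unital partition the
  nonzero zeros of the Hermitian form into classes of size q^2 - 1.\<close>

lemma card_unital_le:
  assumes "card (UNIV :: ('a::{field,finite}) set) = q ^ 2" "q \<ge> 2"
  shows "card (unital q :: 'a ppoint set) \<le> 2 * q ^ 3"
proof -
  let ?U = "unital q :: 'a ppoint set"
  have zeros: "\<Union>?U \<subseteq> {v. herm q v = 0}"
  proof
    fix x assume "x \<in> \<Union>?U"
    then obtain P w where P: "P \<in> pg_points" "x \<in> P" "w \<in> P" "herm q w = 0"
      by (auto simp: unital_def)
    then obtain u where "P = proj_point u" unfolding pg_points_def by blast
    with P obtain c d where "c \<noteq> 0" "x = smult3 c u" "d \<noteq> 0" "w = smult3 d u"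
      by (auto simp: proj_point_def)
    with P(4) show "x \<in> {v. herm q v = 0}" by (simp add: herm_smult3)
  qed
  have "pairwise disjnt ?U"
    unfolding pairwise_def disjnt_def unital_def pg_points_def
    using proj_point_eq_if_mem by blast
  then have "card (\<Union>?U) = (\<Sum>P\<in>?U. card P)" by (simp add: card_Union_disjoint)
  also have "\<dots> = card ?U * (q - 1) * (q + 1)"
    using assms by (simp add: unital_def card_pg_point power2_eq_square algebra_simps)
  finally have "card ?U * (q - 1) * (q + 1) \<le> card {v :: 'a vec3. herm q v = 0}"
    using card_mono[OF _ zeros] by simp
  also have "\<dots> \<le> q ^ 4 * (q + 1)"
    using card_herm_zeros_le[where 'a='a, of q] assms(1) by (simp flip: power_mult)
  finally have "card ?U * (q - 1) * (q + 1) \<le> q ^ 4 * (q + 1)" .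
  then have "card ?U * (q - 1) \<le> q ^ 4" by (metis mult_le_cancel2 zero_less_Suc Suc_eq_plus1)
  moreover have "card ?U * q \<le> card ?U * (q - 1) * 2"
    using assms(2) by auto
  moreover have "2 * q ^ 4 = (2 * q ^ 3) * q" by (simp add: power_numeral_reduce)
  ultimately have "card ?U * q \<le> (2 * q ^ 3) * q" by linarith
  then show ?thesis using assms(2) mult_le_cancel2[of "card ?U" q "2 * q ^ 3"] by simp
qed

section \<open>Cliques of secants\<close>

lemma inter_clique_eq: "X \<subseteq> secants q \<Longrightarrow> X \<inter> clique q P = {L\<in>X. P \<in> L}"
  by (auto simp: clique_def)

lemma card_secants_through_two_points_le:
  fixes X :: "('a::{field,finite}) pline set"
  assumes "X \<subseteq> secants q" "P \<in> unital q" "Q \<in> unital q" "P \<noteq> Q"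
  shows "card {L\<in>X. P \<in> L \<and> Q \<in> L} \<le> 1"
proof -
  have "L = L'" if "L \<in> {L\<in>X. P \<in> L \<and> Q \<in> L}" "L' \<in> {L\<in>X. P \<in> L \<and> Q \<in> L}" for L L'
    using that assms pg_line_unique[of P Q L L'] by (auto simp: secants_def unital_def)
  then show ?thesis by (simp add: card_le_Suc0_iff_eq)
qed

lemma sum_card_clique_eq:
  fixes X :: "('a::{field,finite}) pline set"
  assumes "X \<subseteq> secants q"
  shows "(\<Sum>P\<in>unital q. card (X \<inter> clique q P)) = card X * (q + 1)"
proof -
  have "(\<Sum>P\<in>unital q. card (X \<inter> clique q P)) = (\<Sum>L\<in>X. card {P\<in>unital q. P \<in> L})"
    using assms by (simp add: inter_clique_eq) (rule sum_card_filter_swap; simp)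
  also have "\<dots> = (\<Sum>L\<in>X. q + 1)"
  proof (rule sum.cong)
    fix L assume "L \<in> X"
    then have "card (L \<inter> unital q) = q + 1" using assms by (auto simp: secants_def)
    moreover have "{P\<in>unital q. P \<in> L} = L \<inter> unital q" by auto
    ultimately show "card {P\<in>unital q. P \<in> L} = q + 1" by simp
  qed simp
  finally show ?thesis by simp
qed

lemma sum_card_clique_large_le:
  fixes X :: "('a::{field,finite}) pline set"
  assumes "X \<subseteq> secants q" "b \<ge> 0" "2 * real (card X) \<le> b\<^sup>2"
  shows "(\<Sum>P\<in>{P\<in>unital q. b < real (card (X \<inter> clique q P))}. real (card (X \<inter> clique q P)))
           \<le> 2 * real (card X)"
  using sum_degree_le_if_degrees_large[of X "{P\<in>unital q. b < real (card (X \<inter> clique q P))}" b]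
    card_secants_through_two_points_le[OF assms(1)] assms
  by (simp add: inter_clique_eq)

definition clique_weight :: "nat \<Rightarrow> 'a::field pline set \<Rightarrow> real \<Rightarrow> real \<Rightarrow> real" where
  "clique_weight q X lo hi =
     (\<Sum>P \<in> {P \<in> unital q. 2 \<le> card (X \<inter> clique q P)
                 \<and> lo < real (card (X \<inter> clique q P)) \<and> real (card (X \<inter> clique q P)) \<le> hi}.
        real (card (X \<inter> clique q P)))"

lemma clique_weight_split:
  fixes X :: "('a::{field,finite}) pline set"
  assumes "lo \<le> mid" "mid \<le> hi"
  shows "clique_weight q X lo hi = clique_weight q X lo mid + clique_weight q X mid hi"
proof -
  let ?S = "\<lambda>lo hi. {P \<in> unital q :: 'a ppoint set. 2 \<le> card (X \<inter> clique q P)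
     \<and> lo < real (card (X \<inter> clique q P)) \<and> real (card (X \<inter> clique q P)) \<le> hi}"
  have "?S lo hi = ?S lo mid \<union> ?S mid hi" "?S lo mid \<inter> ?S mid hi = {}"
    using assms by auto
  then show ?thesis by (simp add: clique_weight_def sum.union_disjoint)
qed

lemma clique_sum_ge_clique_weight:
  assumes "2 \<le> lo"
  shows "lo / 4 * clique_weight q X lo hi \<le> clique_sum q X lo hi"
  unfolding clique_weight_def clique_sum_def using assms
  by (intro sum_choose_two_ge_threshold) auto

lemma clique_sum_ge_clique_weight_square:
  fixes X :: "('a::{field,finite}) pline set"
  assumes "real (card (unital q :: 'a ppoint set)) \<le> c"
  shows "((clique_weight q X lo hi)\<^sup>2 / c - clique_weight q X lo hi) / 2 \<le> clique_sum q X lo hi"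
proof -
  let ?S = "{P \<in> unital q :: 'a ppoint set. 2 \<le> card (X \<inter> clique q P)
     \<and> lo < real (card (X \<inter> clique q P)) \<and> real (card (X \<inter> clique q P)) \<le> hi}"
  have "card ?S \<le> card (unital q :: 'a ppoint set)" by (rule card_mono) auto
  then have "real (card ?S) \<le> c" using assms by linarith
  then show ?thesis
    unfolding clique_weight_def clique_sum_def
    using sum_choose_two_ge_square[of ?S c "\<lambda>P. card (X \<inter> clique q P)"] by simp
qed

lemma clique_weight_moderate_ge:
  fixes X :: "('a::{field,finite}) pline set"
  assumes "X \<subseteq> secants q" "card (UNIV :: 'a set) = q ^ 2" "q \<ge> 2"
    and "b \<ge> 0" "2 * real (card X) \<le> b\<^sup>2"
  shows "real (card X) * (real q - 1) - 2 * real q ^ 3 \<le> clique_weight q X (-1) b"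
proof -
  define t where "t P = real (card (X \<inter> clique q P))" for P
  define U where "U = (unital q :: 'a ppoint set)"
  define S where "S = {P\<in>U. t P \<le> 1 \<and> t P \<le> b}"
  define M where "M = {P\<in>U. 2 \<le> card (X \<inter> clique q P) \<and> -1 < t P \<and> t P \<le> b}"
  define L where "L = {P\<in>U. b < t P}"
  have tot: "(\<Sum>P\<in>U. t P) = real (card X) * (real q + 1)"
    using sum_card_clique_eq[OF assms(1)] unfolding t_def U_def of_nat_sum[symmetric]
    by (simp add: algebra_simps)
  have "U = S \<union> (M \<union> L)" "S \<inter> (M \<union> L) = {}" "M \<inter> L = {}"
    by (auto simp: S_def M_def L_def t_def)
  then have "(\<Sum>P\<in>U. t P) = (\<Sum>P\<in>S. t P) + (\<Sum>P\<in>M. t P) + (\<Sum>P\<in>L. t P)"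
    by (simp add: sum.union_disjoint)
  moreover have "(\<Sum>P\<in>S. t P) \<le> 2 * real q ^ 3"
  proof -
    have "(\<Sum>P\<in>S. t P) \<le> real (card S)" using sum_mono[of S t "\<lambda>_. 1"] by (simp add: S_def)
    also have "\<dots> \<le> real (card U)" by (simp add: S_def card_mono)
    also have "\<dots> \<le> 2 * real q ^ 3"
      using card_unital_le[OF assms(2,3)] unfolding U_def
      by (metis of_nat_le_iff of_nat_mult of_nat_numeral of_nat_power)
    finally show ?thesis .
  qed
  moreover have "(\<Sum>P\<in>L. t P) \<le> 2 * real (card X)"
    using sum_card_clique_large_le[OF assms(1,4,5)] by (simp add: L_def U_def t_def)
  moreover have "(\<Sum>P\<in>M. t P) = clique_weight q X (-1) b"
    by (simp add: clique_weight_def M_def U_def t_def)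
  ultimately show ?thesis using tot by (simp add: algebra_simps)
qed

lemma ln_q_quartic_bounds:
  assumes "q \<ge> 2"
  shows "2 \<le> ln (real (q ^ 2 * (q ^ 2 - q + 1)))" "ln (real (q ^ 2 * (q ^ 2 - q + 1))) \<le> 4 * real q"
proof -
  define N where "N = q ^ 2 * (q ^ 2 - q + 1)"
  have "2 * q \<le> q * q" using assms by simp
  then have "q ^ 2 \<ge> 4" "q ^ 2 - q + 1 \<ge> 3" "q ^ 2 - q + 1 \<le> q ^ 2"
    using assms unfolding power2_eq_square by linarith+
  then have "4 * 3 \<le> N" "N \<le> q ^ 2 * q ^ 2"
    unfolding N_def by (intro mult_le_mono mult_le_mono2; simp)+
  then have N: "12 \<le> N" "N \<le> q ^ 4" by (simp_all flip: power_add)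
  have "exp (2::real) = exp 1 * exp 1" by (simp flip: exp_add)
  also have "\<dots> \<le> 3 * 3" using exp_le by (intro mult_mono) auto
  also have "\<dots> \<le> real N" using N by simp
  finally show "2 \<le> ln (real N)" using N by (subst ln_ge_iff) auto
  have "ln (real N) \<le> ln (real q ^ 4)"
    using N assms by (subst ln_le_cancel_iff) (auto simp flip: of_nat_power)
  also have "\<dots> = 4 * ln (real q)" by (simp add: ln_realpow)
  also have "\<dots> \<le> 4 * real q" using ln_le_minus_one[of "real q"] assms by simp
  finally show "ln (real N) \<le> 4 * real q" .
qed

lemma moderate_case_arith:
  fixes Q L b B :: real
  assumes "Q \<ge> 2" "L \<ge> 2" "4096 * Q \<le> b" "2 ^ 21 * Q ^ 3 \<le> B"
  shows "Q * (2 ^ 24 * Q\<^sup>2) powr (3 / 2) / (16 * L\<^sup>2) \<le> b / L / 4 * B"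
proof -
  have "(2 ^ 24 * Q\<^sup>2) powr (3 / 2) = ((2 ^ 12 * Q) powr 2) powr (3 / 2)"
    using assms(1) by (simp add: power_mult_distrib)
  also have "\<dots> = (2 ^ 12 * Q) ^ 3"
    using assms(1) by (simp only: powr_powr) (simp add: power_mult_distrib)
  finally have "(2 ^ 24 * Q\<^sup>2) powr (3 / 2) = (2 ^ 12 * Q) ^ 3" .
  then have "Q * (2 ^ 24 * Q\<^sup>2) powr (3 / 2) / (16 * L\<^sup>2) = (2 ^ 31 * Q ^ 4 / L) * (2 / L)"
    by (simp add: power2_eq_square power_numeral_reduce field_simps)
  also have "\<dots> \<le> 2 ^ 31 * Q ^ 4 / L"
    using assms(1,2) by (intro mult_left_le) auto
  also have "\<dots> = (4096 * Q) / L / 4 * (2 ^ 21 * Q ^ 3)"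
    by (simp add: power_numeral_reduce field_simps)
  also have "\<dots> \<le> b / L / 4 * B"
    using assms by (intro mult_mono divide_right_mono) auto
  finally show ?thesis .
qed

lemma small_case_arith:
  fixes Q A :: real
  assumes "Q > 0" "6291454 * Q ^ 3 \<le> A"
  shows "(2 ^ 24 * Q\<^sup>2)\<^sup>2 / (64 * Q) \<le> (A\<^sup>2 / (2 * Q ^ 3) - A) / 2"
proof -
  have "0 \<le> A" using assms zero_less_power[of Q 3] by linarith
  have "A\<^sup>2 / (2 * Q ^ 3) - A = A * (A / (2 * Q ^ 3) - 1)"
    using assms by (simp add: power2_eq_square field_simps)
  also have "\<dots> \<ge> (6291454 * Q ^ 3) * 3145726"
    using assms \<open>0 \<le> A\<close> by (intro mult_mono) (auto simp: field_simps)
  moreover have "(2 ^ 24 * Q\<^sup>2)\<^sup>2 / (64 * Q) \<le> (6291454 * Q ^ 3) * 3145726 / 2"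
    using assms by (simp add: power2_eq_square power_numeral_reduce field_simps)
  ultimately show ?thesis by simp
qed

theorem mainTheorem6:
  fixes q :: nat and X :: "('a::{field,finite}) pline set"
  assumes "\<exists>p k. prime p \<and> k \<ge> 1 \<and> q = p ^ k"
    and "q \<ge> 2"
    and "card (UNIV :: 'a set) = q ^ 2"
    and "X \<subseteq> secants q"
    and "card X = 2 ^ 24 * q ^ 2"
  shows "let n = real (q ^ 2 * (q ^ 2 - q + 1)); m = real (2 ^ 24 * q ^ 2) in
     clique_sum q X (-1) (sqrt (2 * m) / ln n) \<ge> m ^ 2 / (64 * real q)
   \<or> clique_sum q X (sqrt (2 * m) / ln n) (sqrt (2 * m))
        \<ge> real q * m powr (3 / 2) / (16 * (ln n) ^ 2)"
proof -
  define Q where "Q = real q"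
  define m where "m = real (2 ^ 24 * q ^ 2)"
  define Ln where "Ln = ln (real (q ^ 2 * (q ^ 2 - q + 1)))"
  define b where "b = sqrt (2 * m)"
  define a where "a = b / Ln"
  have Q: "Q \<ge> 2" and m: "m = 2 ^ 24 * Q\<^sup>2" "real (card X) = m"
    using assms(2,5) by (simp_all add: Q_def m_def)
  have Ln: "2 \<le> Ln" "Ln \<le> 4 * Q" using ln_q_quartic_bounds[OF assms(2)] by (simp_all add: Ln_def Q_def)
  have b: "4096 * Q \<le> b" "b\<^sup>2 = 2 * m" "0 \<le> b"
    using Q by (simp_all add: b_def m real_le_rsqrt power_mult_distrib)
  have "b / (4 * Q) \<le> a" unfolding a_def using Ln Q b by (intro divide_left_mono) auto
  moreover have "1024 \<le> b / (4 * Q)" using b Q by (simp add: field_simps)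
  ultimately have a: "2 \<le> a" by simp
  moreover have "a \<le> b" unfolding a_def using Ln b by (simp add: divide_le_eq)
  ultimately have "clique_weight q X (-1) b = clique_weight q X (-1) a + clique_weight q X a b"
    by (intro clique_weight_split) auto
  moreover have "m * (Q - 1) - 2 * Q ^ 3 \<le> clique_weight q X (-1) b"
    using clique_weight_moderate_ge[OF assms(4,3,2) b(3)] b(2) m by (simp add: Q_def)
  moreover have "2 ^ 24 * Q\<^sup>2 \<le> 2 ^ 23 * Q ^ 3"
    using mult_right_mono[OF Q, of "2 ^ 23 * Q\<^sup>2"] by (simp add: power2_eq_square power3_eq_cube)
  then have "(2 ^ 23 - 2) * Q ^ 3 \<le> m * (Q - 1) - 2 * Q ^ 3"
    unfolding m by (simp add: algebra_simps power2_eq_square power3_eq_cube)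
  ultimately have weight: "(2 ^ 23 - 2) * Q ^ 3 \<le> clique_weight q X (-1) a + clique_weight q X a b"
    by linarith
  show ?thesis
  proof (cases "2 ^ 21 * Q ^ 3 \<le> clique_weight q X a b")
    case True
    have "Q * m powr (3 / 2) / (16 * Ln\<^sup>2) \<le> clique_sum q X a b"
      using moderate_case_arith[OF Q Ln(1) b(1) True] clique_sum_ge_clique_weight[OF a, of q X b]
      unfolding a_def m by linarith
    then show ?thesis by (simp add: Let_def Q_def m_def Ln_def a_def b_def)
  next
    case False
    then have "6291454 * Q ^ 3 \<le> clique_weight q X (-1) a" using weight by simp
    then have "m\<^sup>2 / (64 * Q) \<le> ((clique_weight q X (-1) a)\<^sup>2 / (2 * Q ^ 3) - clique_weight q X (-1) a) / 2"
      using small_case_arith Q unfolding m by simp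
    also have "\<dots> \<le> clique_sum q X (-1) a"
      using card_unital_le[OF assms(3,2)] unfolding Q_def
      by (intro clique_sum_ge_clique_weight_square) (metis of_nat_le_iff of_nat_mult of_nat_numeral of_nat_power)
    finally show ?thesis by (simp add: Let_def Q_def m_def Ln_def a_def b_def)
  qed
qed

end
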